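(* Let $(X,T)$ be a minimal topological dynamical system with $X$ compact metrisable and $T$ abelian, with maximal equicontinuous factor map $\pi:X\to X_{max}$, and let $e$ be a minimal idempotent of its Ellis semigroup $E$. Let $s:X_{max}\to{\mathcal H}_e$ be a map with $ev_0\circ\pi_*\circ s={\mathrm{id}}$ and $s\circ\delta^t=\alpha^t\circ s$ for all $t\in T$. Let $f\in K_e$ with $f\neq e$ and let $a\in X_{max}$. Then $\mathrm{supp}(s(a)fs(a)^{-1})=\mathrm{supp}(f)+a$, where $s(a)^{-1}$ is the inverse in ${\mathcal H}_e$.
   Context: $T$ acts on $X$ by homeomorphisms $\alpha^t$. $E$ is the closure of $\{\alpha^t\}$ in $X^X$ (pointwise convergence, composition as product); minimal idempotents are idempotents of its smallest two-sided ideal. ${\mathcal H}_e=eEe$ is the structure group, a group with identity $e$. Since $(X,T)$ is minimal and $T$ abelian, $X_{max}$ is a compact abelian group (written additively, neutral element $0$) on which $T$ acts by translations $\delta^t$; its Ellis semigroup $E(X_{max})$ is a group and evaluation at $0$, $ev_0:E(X_{max})\to X_{max}$, is an isomorphism. $\pi_*:E(X)\to E(X_{max})$ is the induced epimorphism $\pi_*(g)(\pi(x))=\pi(g(x))$. $K_e$ is the subgroup of ${\mathcal H}_e$ of elements $g$ preserving the fibres of $\pi$ (i.e. $\pi(g(x))=\pi(x)$ for all $x$). For $g\in{\mathcal H}_e$, $g$ acts trivially at $\xi\in X_{max}$ if all points of $e(\pi^{-1}(\xi))$ are fixed by $g$, and $\mathrm{supp}(g)$ is the set of points at which $g$ does not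 act trivially. *)

theory Defs
  imports "HOL-Analysis.Analysis"
begin

definition action_by_homeos :: "('t::ab_group_add \<Rightarrow> 'a::topological_space \<Rightarrow> 'a) \<Rightarrow> bool" where
  "action_by_homeos \<alpha> \<longleftrightarrow> \<alpha> 0 = id \<and> (\<forall>s t. \<alpha> (s + t) = \<alpha> s \<circ> \<alpha> t)
     \<and> (\<forall>t. continuous_on UNIV (\<alpha> t))"

definition minimal_system :: "('t \<Rightarrow> 'a::topological_space \<Rightarrow> 'a) \<Rightarrow> bool" where
  "minimal_system \<alpha> \<longleftrightarrow> (\<forall>x. closure (range (\<lambda>t. \<alpha> t x)) = UNIV)"

definition equicontinuous_family :: "'b::metric_space set \<Rightarrow> ('t \<Rightarrow> 'b \<Rightarrow> 'b) \<Rightarrow> bool" where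
  "equicontinuous_family Y \<beta> \<longleftrightarrow> (\<forall>\<epsilon>>0. \<exists>\<delta>>0. \<forall>y\<in>Y. \<forall>y'\<in>Y.
      dist y y' < \<delta> \<longrightarrow> (\<forall>t. dist (\<beta> t y) (\<beta> t y') < \<epsilon>))"

definition factor_map :: "('t \<Rightarrow> 'a::topological_space \<Rightarrow> 'a) \<Rightarrow> ('a \<Rightarrow> 'b::topological_space)
     \<Rightarrow> 'b set \<Rightarrow> ('t \<Rightarrow> 'b \<Rightarrow> 'b) \<Rightarrow> bool" where
  "factor_map \<alpha> \<phi> Y \<beta> \<longleftrightarrow> continuous_on UNIV \<phi> \<and> range \<phi> = Y \<and> (\<forall>t x. \<phi> (\<alpha> t x) = \<beta> t (\<phi> x))"

text \<open>Maximality: every equicontinuous factor (realised, up to conjugacy, inside the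
  metrisable space nat \<Rightarrow> real, which contains copies of all compact metrisable spaces)
  factors through pi.\<close>
definition max_equicontinuous_factor ::
  "('t \<Rightarrow> 'a::topological_space \<Rightarrow> 'a) \<Rightarrow> ('a \<Rightarrow> 'b::{ab_group_add,topological_group_add,metric_space})
    \<Rightarrow> ('t \<Rightarrow> 'b) \<Rightarrow> bool" where
  "max_equicontinuous_factor \<alpha> \<pi> \<tau> \<longleftrightarrow>
     compact (UNIV :: 'b set)
   \<and> factor_map \<alpha> \<pi> UNIV (\<lambda>t \<xi>. \<xi> + \<tau> t)
   \<and> equicontinuous_family UNIV (\<lambda>t \<xi>. \<xi> + \<tau> t)
   \<and> (\<forall>(Y :: (nat \<Rightarrow> real) set) \<phi> \<beta>. factor_map \<alpha> \<phi> Y \<beta> \<and> equicontinuous_family Y \<beta>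
        \<longrightarrow> (\<exists>\<psi>. continuous_on UNIV \<psi> \<and> \<phi> = \<psi> \<circ> \<pi>))"

definition delta :: "('t \<Rightarrow> 'b::ab_group_add) \<Rightarrow> 't \<Rightarrow> 'b \<Rightarrow> 'b" where
  "delta \<tau> t \<xi> = \<xi> + \<tau> t"

text \<open>Ellis semigroup: closure of the maps alpha^t in X^X (pointwise convergence);
  product is composition.\<close>
definition ellis :: "('t \<Rightarrow> 'a::topological_space \<Rightarrow> 'a) \<Rightarrow> ('a \<Rightarrow> 'a) set" where
  "ellis \<alpha> = closure (range \<alpha>)"

definition two_sided_ideal :: "('a \<Rightarrow> 'a) set \<Rightarrow> ('a \<Rightarrow> 'a) set \<Rightarrow> bool" where
  "two_sided_ideal E I \<longleftrightarrow> I \<noteq> {} \<and> I \<subseteq> E \<and> (\<forall>g\<in>E. \<forall>i\<in>I. g \<circ> i \<in> I \<and> i \<circ> g \<in> I)"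

definition min_ideal :: "('a \<Rightarrow> 'a) set \<Rightarrow> ('a \<Rightarrow> 'a) set" where
  "min_ideal E = \<Inter> {I. two_sided_ideal E I}"

definition minimal_idempotent :: "('t \<Rightarrow> 'a::topological_space \<Rightarrow> 'a) \<Rightarrow> ('a \<Rightarrow> 'a) \<Rightarrow> bool" where
  "minimal_idempotent \<alpha> e \<longleftrightarrow> e \<in> min_ideal (ellis \<alpha>) \<and> e \<circ> e = e"

definition struct_group :: "('t \<Rightarrow> 'a::topological_space \<Rightarrow> 'a) \<Rightarrow> ('a \<Rightarrow> 'a) \<Rightarrow> ('a \<Rightarrow> 'a) set" where
  "struct_group \<alpha> e = {e \<circ> g \<circ> e | g. g \<in> ellis \<alpha>}"

definition H_inv :: "('t \<Rightarrow> 'a::topological_space \<Rightarrow> 'a) \<Rightarrow> ('a \<Rightarrow> 'a) \<Rightarrow> ('a \<Rightarrow> 'a) \<Rightarrow> ('a \<Rightarrow> 'a)" where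
  "H_inv \<alpha> e g = (THE h. h \<in> struct_group \<alpha> e \<and> g \<circ> h = e \<and> h \<circ> g = e)"

text \<open>pi_* : E(X) \<rightarrow> E(X_max), pi_*(g)(pi x) = pi (g x).\<close>
definition pi_star :: "('a \<Rightarrow> 'b) \<Rightarrow> ('a \<Rightarrow> 'a) \<Rightarrow> ('b \<Rightarrow> 'b)" where
  "pi_star \<pi> g = (\<lambda>\<xi>. \<pi> (g (SOME x. \<pi> x = \<xi>)))"

definition ev0 :: "('b::zero \<Rightarrow> 'b) \<Rightarrow> 'b" where
  "ev0 F = F 0"

definition K_group :: "('t \<Rightarrow> 'a::topological_space \<Rightarrow> 'a) \<Rightarrow> ('a \<Rightarrow> 'b) \<Rightarrow> ('a \<Rightarrow> 'a) \<Rightarrow> ('a \<Rightarrow> 'a) set" where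
  "K_group \<alpha> \<pi> e = {g \<in> struct_group \<alpha> e. \<forall>x. \<pi> (g x) = \<pi> x}"

definition acts_trivially_at :: "('a \<Rightarrow> 'b) \<Rightarrow> ('a \<Rightarrow> 'a) \<Rightarrow> ('a \<Rightarrow> 'a) \<Rightarrow> 'b \<Rightarrow> bool" where
  "acts_trivially_at \<pi> e g \<xi> \<longleftrightarrow> (\<forall>y \<in> e ` (\<pi> -` {\<xi>}). g y = y)"

definition supp :: "('a \<Rightarrow> 'b) \<Rightarrow> ('a \<Rightarrow> 'a) \<Rightarrow> ('a \<Rightarrow> 'a) \<Rightarrow> 'b set" where
  "supp \<pi> e g = {\<xi>. \<not> acts_trivially_at \<pi> e g \<xi>}"

end

(* An element g of the Ellis semigroup moves the fibres of the maximal equicontinuous factor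
   rigidly: the displacement pi (g x) - pi x is a closed condition on g that does not depend on x
   for the maps alpha t, hence for all of their closure, and for g = s a it equals a by the section
   property. Conjugating f by s a therefore shifts the fibres on which f acts trivially by a.
   The substantial point is that H_e = eEe is a group, so that the inverse of s a exists; this is
   Ellis' theorem, proved through a minimal left ideal of the compact semigroup E, which is
   obtained from Zorn's lemma applied to closed left ideals. *)

theory Submission
  imports Defs
begin

lemma compact_imp_closed_fun:
  fixes K :: "('a \<Rightarrow> 'b::metric_space) set"
  assumes "compact K"
  shows "closed K"
proof -
  have H: "Hausdorff_space (euclidean :: ('a \<Rightarrow> 'b) topology)"
  proof -
    have "Hausdorff_space (product_topology (\<lambda>i::'a. euclidean :: 'b topology) UNIV)"
      unfolding Hausdorff_space_product_topology by simp
    then show ?thesis by (simp only: euclidean_product_topology)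
  qed
  have "compactin euclidean K" using assms by simp
  then have "closedin euclidean K" using compactin_imp_closedin[OF H] by blast
  then show ?thesis by (simp only: closed_closedin)
qed

lemma compact_UNIV_fun:
  assumes "compact (UNIV :: 'b::topological_space set)"
  shows "compact (UNIV :: ('a \<Rightarrow> 'b) set)"
proof -
  have "compact_space (euclidean :: 'b topology)"
    using assms by (simp add: compact_space_def)
  then have "compact_space (product_topology (\<lambda>_::'a. euclidean :: 'b topology) UNIV)"
    by (simp add: compact_space_product_topology)
  then show ?thesis
    by (simp add: compact_space_def euclidean_product_topology)
qed

lemma continuous_on_comp_right: "continuous_on UNIV (\<lambda>k::'a \<Rightarrow> 'b::topological_space. k \<circ> x)"
  by (rule continuous_on_coordinatewise_then_product) simp

lemma continuous_on_eval_comp: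
  assumes "continuous_on UNIV (h :: 'a::topological_space \<Rightarrow> 'b::topological_space)"
  shows "continuous_on UNIV (\<lambda>k::'c \<Rightarrow> 'a. h (k x))"
  using continuous_on_compose2[OF assms continuous_on_product_coordinates[of x]] by simp

lemma continuous_on_comp_left:
  assumes "continuous_on UNIV (h :: 'a::topological_space \<Rightarrow> 'b::topological_space)"
  shows "continuous_on UNIV (\<lambda>k::'c \<Rightarrow> 'a. h \<circ> k)"
proof (rule continuous_on_coordinatewise_then_product)
  show "continuous_on UNIV (\<lambda>k::'c \<Rightarrow> 'a. (h \<circ> k) x)" for x
    using continuous_on_eval_comp[OF assms] by simp
qed

definition left_ideal :: "('a \<Rightarrow> 'a) set \<Rightarrow> ('a \<Rightarrow> 'a) set \<Rightarrow> bool" where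
  "left_ideal S L \<longleftrightarrow> L \<noteq> {} \<and> L \<subseteq> S \<and> (\<forall>g\<in>S. \<forall>l\<in>L. g \<circ> l \<in> L)"

definition minimal_left_ideal :: "('a \<Rightarrow> 'a) set \<Rightarrow> ('a \<Rightarrow> 'a) set \<Rightarrow> bool" where
  "minimal_left_ideal S L \<longleftrightarrow> left_ideal S L \<and> (\<forall>J. left_ideal S J \<and> J \<subseteq> L \<longrightarrow> J = L)"

lemma corner_absorb:
  assumes "e \<circ> e = e" and "k \<in> {e \<circ> g \<circ> e | g. g \<in> S}"
  shows "e \<circ> k = k" "k \<circ> e = k"
proof -
  obtain g where k: "k = e \<circ> g \<circ> e" using assms(2) by blast
  have "e \<circ> (e \<circ> h) = e \<circ> h" for h by (simp add: comp_assoc[symmetric] assms(1))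
  then show "e \<circ> k = k" "k \<circ> e = k" unfolding k by (simp_all add: comp_assoc assms(1))
qed

locale compact_map_semigroup =
  fixes S :: "('a::metric_space \<Rightarrow> 'a) set"
  assumes compact: "compact S"
    and nonempty: "S \<noteq> {}"
    and comp_closed: "g \<in> S \<Longrightarrow> h \<in> S \<Longrightarrow> g \<circ> h \<in> S"
begin

lemma principal_left_ideal:
  assumes "x \<in> S"
  shows "left_ideal S ((\<lambda>k. k \<circ> x) ` S)" "closed ((\<lambda>k. k \<circ> x) ` S)"
proof -
  show "left_ideal S ((\<lambda>k. k \<circ> x) ` S)"
    unfolding left_ideal_def using nonempty assms by (auto simp: comp_assoc[symmetric] comp_closed)
  have "compact ((\<lambda>k. k \<circ> x) ` S)"
    by (rule compact_continuous_image[OF continuous_on_subset[OF continuous_on_comp_right] compact]) simp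
  then show "closed ((\<lambda>k. k \<circ> x) ` S)"
    by (rule compact_imp_closed_fun)
qed

lemma exists_minimal_closed_left_ideal:
  "\<exists>L. left_ideal S L \<and> closed L \<and> (\<forall>J. left_ideal S J \<and> closed J \<and> J \<subseteq> L \<longrightarrow> J = L)"
proof -
  define A where "A = {L. left_ideal S L \<and> closed L}"
  have "\<exists>L\<in>A. \<forall>J\<in>A. J \<subseteq> L \<longrightarrow> J = L"
  proof (rule predicate_Zorn)
    show "partial_order_on A (relation_of (\<lambda>L J. J \<subseteq> L) A)"
      by (rule partial_order_on_relation_ofI) auto
  next
    fix C assume "C \<in> Chains (relation_of (\<lambda>L J. J \<subseteq> L) A)"
    then have CA: "C \<subseteq> A" and chain: "\<forall>L\<in>C. \<forall>J\<in>C. L \<subseteq> J \<or> J \<subseteq> L"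
      unfolding Chains_def relation_of_def by auto
    show "\<exists>U\<in>A. \<forall>L\<in>C. U \<subseteq> L"
    proof (cases "C = {}")
      case True
      have "left_ideal S S"
        unfolding left_ideal_def using nonempty comp_closed by blast
      then have "S \<in> A"
        unfolding A_def using compact_imp_closed_fun[OF compact] by blast
      then show ?thesis using True by blast
    next
      case False
      then obtain L0 where "L0 \<in> C" by blast
      have "S \<inter> \<Inter>C \<noteq> {}"
      proof (rule compact_imp_fip[OF compact])
        show "closed L" if "L \<in> C" for L using that CA by (auto simp: A_def)
      next
        fix F assume F: "finite F" "F \<subseteq> C"
        show "S \<inter> \<Inter>F \<noteq> {}"
        proof (cases "F = {}")
          case True then show ?thesis using nonempty by simp
        next
          case False
          have "subset.chain A F" unfolding subset_chain_def using F CA chain by blast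
          then have "\<Inter>F \<in> A" using Inter_in_chain[OF F(1) False] F CA by blast
          then show ?thesis by (auto simp: A_def left_ideal_def)
        qed
      qed
      moreover have "\<Inter>C \<subseteq> S" using \<open>L0 \<in> C\<close> CA unfolding A_def left_ideal_def by blast
      moreover have "g \<circ> l \<in> \<Inter>C" if "g \<in> S" "l \<in> \<Inter>C" for g l
        using that CA by (auto simp: A_def left_ideal_def)
      moreover have "closed (\<Inter>C)" using CA by (auto simp: A_def intro: closed_Inter)
      ultimately have "\<Inter>C \<in> A"
        unfolding A_def left_ideal_def by blast
      then show ?thesis by blast
    qed
  qed
  then show ?thesis unfolding A_def by blast
qed

lemma exists_minimal_left_ideal: "\<exists>L. minimal_left_ideal S L"
proof -
  obtain L where L: "left_ideal S L" "closed L"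
    and L_min: "\<And>J. left_ideal S J \<Longrightarrow> closed J \<Longrightarrow> J \<subseteq> L \<Longrightarrow> J = L"
    using exists_minimal_closed_left_ideal by blast
  have "J = L" if J: "left_ideal S J" "J \<subseteq> L" for J
  proof -
    obtain x where "x \<in> J" using J(1) unfolding left_ideal_def by blast
    then have "x \<in> S" and Sx_J: "(\<lambda>k. k \<circ> x) ` S \<subseteq> J"
      using J(1) unfolding left_ideal_def by blast+
    then have "(\<lambda>k. k \<circ> x) ` S = L"
      using L_min[OF principal_left_ideal[OF \<open>x \<in> S\<close>]] J(2) by blast
    then show "J = L" using Sx_J J(2) by blast
  qed
  then show ?thesis using L(1) unfolding minimal_left_ideal_def by blast
qed

lemma two_sided_ideal_left_ideal_times:
  assumes "left_ideal S L"
  shows "two_sided_ideal S {l \<circ> t | l t. l \<in> L \<and> t \<in> S}"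
  unfolding two_sided_ideal_def
proof (intro conjI ballI)
  have L: "L \<noteq> {}" "L \<subseteq> S" "\<And>g l. g \<in> S \<Longrightarrow> l \<in> L \<Longrightarrow> g \<circ> l \<in> L"
    using assms unfolding left_ideal_def by blast+
  show "{l \<circ> t | l t. l \<in> L \<and> t \<in> S} \<noteq> {}" using L(1) nonempty by blast
  show "{l \<circ> t | l t. l \<in> L \<and> t \<in> S} \<subseteq> S" using L(2) comp_closed by blast
  fix g i assume g: "g \<in> S" and "i \<in> {l \<circ> t | l t. l \<in> L \<and> t \<in> S}"
  then obtain l t where i: "i = l \<circ> t" "l \<in> L" "t \<in> S" by blast
  have "g \<circ> i = (g \<circ> l) \<circ> t" "i \<circ> g = l \<circ> (t \<circ> g)" unfolding i by (simp_all add: comp_assoc)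
  then show "g \<circ> i \<in> {l \<circ> t | l t. l \<in> L \<and> t \<in> S}" "i \<circ> g \<in> {l \<circ> t | l t. l \<in> L \<and> t \<in> S}"
    using L(3)[OF g i(2)] comp_closed[OF i(3) g] i by blast+
qed

lemma min_ideal_subset: "min_ideal S \<subseteq> S"
proof -
  have "two_sided_ideal S S"
    unfolding two_sided_ideal_def using nonempty comp_closed by blast
  then show ?thesis unfolding min_ideal_def by blast
qed

lemma min_idempotent_left_inverse:
  assumes e: "e \<in> min_ideal S" "e \<circ> e = e"
    and x: "x \<in> S" "e \<circ> x = x" "x \<circ> e = x"
  shows "\<exists>y\<in>S. y \<circ> x = e"
proof -
  obtain L where L: "left_ideal S L" and L_min: "\<And>J. left_ideal S J \<Longrightarrow> J \<subseteq> L \<Longrightarrow> J = L"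
    using exists_minimal_left_ideal unfolding minimal_left_ideal_def by blast
  have L_ideal: "g \<circ> l \<in> L" if "g \<in> S" "l \<in> L" for g l
    using L that unfolding left_ideal_def by blast
  have "e \<in> {l \<circ> t | l t. l \<in> L \<and> t \<in> S}"
    using e(1) two_sided_ideal_left_ideal_times[OF L] unfolding min_ideal_def by blast
  then obtain l t where "e = l \<circ> t" "l \<in> L" "t \<in> S" by blast
  define c where "c = t \<circ> e"
  have e_lc: "l \<circ> c = e" unfolding c_def using \<open>e = l \<circ> t\<close> e(2) by (simp add: comp_assoc[symmetric])
  \<comment> \<open>The left ideal of those k with k c in S x contains x l, so by minimality it is all of L.\<close>
  define J where "J = {k \<in> L. k \<circ> c \<in> (\<lambda>y. y \<circ> x) ` S}"
  have "e \<in> S" using e(1) min_ideal_subset by blast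
  have "(x \<circ> l) \<circ> c = e \<circ> x" using e_lc x by (simp add: comp_assoc)
  then have "(x \<circ> l) \<circ> c \<in> (\<lambda>y. y \<circ> x) ` S" using \<open>e \<in> S\<close> by (rule image_eqI)
  then have "x \<circ> l \<in> J" unfolding J_def using L_ideal[OF x(1) \<open>l \<in> L\<close>] by blast
  moreover have "g \<circ> k \<in> J" if "g \<in> S" "k \<in> J" for g k
  proof -
    obtain y where y: "y \<in> S" "k \<circ> c = y \<circ> x" "k \<in> L" using \<open>k \<in> J\<close> unfolding J_def by blast
    have "(g \<circ> k) \<circ> c = (g \<circ> y) \<circ> x" using y(2) by (simp add: comp_assoc)
    then have "(g \<circ> k) \<circ> c \<in> (\<lambda>y. y \<circ> x) ` S" using comp_closed[OF \<open>g \<in> S\<close> y(1)] by (rule image_eqI)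
    then show ?thesis unfolding J_def using L_ideal[OF \<open>g \<in> S\<close> y(3)] by blast
  qed
  moreover have "J \<subseteq> L" unfolding J_def by blast
  moreover have "L \<subseteq> S" using L unfolding left_ideal_def by blast
  ultimately have "left_ideal S J" "J \<subseteq> L" unfolding left_ideal_def by blast+
  then have "l \<in> J" using L_min \<open>l \<in> L\<close> by blast
  then obtain y where "y \<in> S" "l \<circ> c = y \<circ> x" unfolding J_def by blast
  then show ?thesis using e_lc by metis
qed

lemma min_idempotent_inverse_unique:
  assumes e: "e \<in> min_ideal S" "e \<circ> e = e"
    and x: "x \<in> {e \<circ> g \<circ> e | g. g \<in> S}"
  shows "\<exists>!h. h \<in> {e \<circ> g \<circ> e | g. g \<in> S} \<and> x \<circ> h = e \<and> h \<circ> x = e"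
proof -
  let ?H = "{e \<circ> g \<circ> e | g. g \<in> S}"
  have "e \<in> S" using e(1) min_ideal_subset by blast
  have H_S: "k \<in> S" if k: "k \<in> ?H" for k
  proof -
    obtain g where "k = e \<circ> g \<circ> e" "g \<in> S" using k by blast
    then show ?thesis using comp_closed \<open>e \<in> S\<close> by simp
  qed
  note absorb = corner_absorb[OF e(2)]
  have left_inv: "\<exists>h\<in>?H. h \<circ> k = e" if k: "k \<in> ?H" for k
  proof -
    obtain y where "y \<in> S" "y \<circ> k = e"
      using min_idempotent_left_inverse[OF e H_S[OF k] absorb[OF k]] by blast
    show ?thesis
    proof (rule bexI)
      show "(e \<circ> y \<circ> e) \<circ> k = e"
        using absorb(1)[OF k] \<open>y \<circ> k = e\<close> e(2) by (simp add: comp_assoc)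
      show "e \<circ> y \<circ> e \<in> ?H" using \<open>y \<in> S\<close> by blast
    qed
  qed
  obtain h where h: "h \<in> ?H" "h \<circ> x = e" using left_inv[OF x] by blast
  obtain h' where h': "h' \<circ> h = e" using left_inv[OF h(1)] by blast
  \<comment> \<open>Left inverses in eSe are two-sided: x h = h' (h x) h = h' h = e.\<close>
  have "x \<circ> h = (h' \<circ> h) \<circ> (x \<circ> h)" using absorb(1)[OF x] h' by (simp add: comp_assoc[symmetric])
  also have "\<dots> = h' \<circ> (h \<circ> x) \<circ> h" by (simp add: comp_assoc)
  also have "\<dots> = e" using h h' absorb[OF h(1)] by (simp add: comp_assoc)
  finally have "x \<circ> h = e" .
  show ?thesis
  proof (rule ex1I)
    show "h \<in> ?H \<and> x \<circ> h = e \<and> h \<circ> x = e" using h \<open>x \<circ> h = e\<close> by simp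
  next
    fix h2 assume h2: "h2 \<in> ?H \<and> x \<circ> h2 = e \<and> h2 \<circ> x = e"
    have "h2 = h2 \<circ> (x \<circ> h)" using absorb(2)[OF conjunct1[OF h2]] \<open>x \<circ> h = e\<close> by simp
    also have "\<dots> = (h2 \<circ> x) \<circ> h" by (simp add: comp_assoc)
    also have "\<dots> = h" using h2 absorb(1)[OF h(1)] by simp
    finally show "h2 = h" .
  qed
qed

end

lemma ellis_compact:
  assumes "compact (UNIV :: 'a::topological_space set)"
  shows "compact (ellis (\<alpha> :: 't \<Rightarrow> 'a \<Rightarrow> 'a))"
  using closed_Int_compact[OF closed_closure compact_UNIV_fun[OF assms]]
  unfolding ellis_def by simp

lemma ellis_comp_closed:
  assumes act: "action_by_homeos \<alpha>" and g: "g \<in> ellis \<alpha>" and h: "h \<in> ellis \<alpha>"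
  shows "g \<circ> h \<in> ellis \<alpha>"
proof -
  have add: "\<alpha> (s + t) = \<alpha> s \<circ> \<alpha> t" and cont: "continuous_on UNIV (\<alpha> t)" for s t
    using act unfolding action_by_homeos_def by simp_all
  \<comment> \<open>Right composition is always continuous, left composition with a continuous map too,
    so both closure properties only have to be checked on \<open>range \<alpha>\<close>.\<close>
  have left: "\<alpha> t \<circ> k \<in> ellis \<alpha>" if k: "k \<in> ellis \<alpha>" for t k
  proof -
    have "(\<lambda>k. \<alpha> t \<circ> k) ` closure (range \<alpha>) \<subseteq> closure (range \<alpha>)"
    proof (rule image_closure_subset)
      show "continuous_on (closure (range \<alpha>)) (\<lambda>k. \<alpha> t \<circ> k)"
        using continuous_on_comp_left[OF cont] by (rule continuous_on_subset) simp
      have "(\<lambda>k. \<alpha> t \<circ> k) ` range \<alpha> \<subseteq> range \<alpha>"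
        by (auto simp: add[symmetric])
      then show "(\<lambda>k. \<alpha> t \<circ> k) ` range \<alpha> \<subseteq> closure (range \<alpha>)"
        using closure_subset by blast
    qed simp
    then show ?thesis using k unfolding ellis_def by blast
  qed
  have "(\<lambda>k. k \<circ> h) ` closure (range \<alpha>) \<subseteq> closure (range \<alpha>)"
  proof (rule image_closure_subset)
    show "continuous_on (closure (range \<alpha>)) (\<lambda>k. k \<circ> h)"
      using continuous_on_comp_right by (rule continuous_on_subset) simp
    show "(\<lambda>k. k \<circ> h) ` range \<alpha> \<subseteq> closure (range \<alpha>)"
      using left[OF h] unfolding ellis_def by blast
  qed simp
  then show ?thesis using g unfolding ellis_def by blast
qed

lemma compact_map_semigroup_ellis:
  fixes \<alpha> :: "'t::ab_group_add \<Rightarrow> 'a::metric_space \<Rightarrow> 'a"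
  assumes "action_by_homeos \<alpha>" and "compact (UNIV :: 'a set)"
  shows "compact_map_semigroup (ellis \<alpha>)"
proof
  show "compact (ellis \<alpha>)" using assms(2) by (rule ellis_compact)
  have "range \<alpha> \<subseteq> ellis \<alpha>" unfolding ellis_def by (rule closure_subset)
  then show "ellis \<alpha> \<noteq> {}" by blast
qed (use assms(1) ellis_comp_closed in blast)

lemma minimal_idempotent_in_ellis:
  fixes \<alpha> :: "'t::ab_group_add \<Rightarrow> 'a::metric_space \<Rightarrow> 'a"
  assumes "action_by_homeos \<alpha>" and "compact (UNIV :: 'a set)" and "minimal_idempotent \<alpha> e"
  shows "e \<in> ellis \<alpha>"
  using compact_map_semigroup.min_ideal_subset[OF compact_map_semigroup_ellis[OF assms(1,2)]] assms(3)
  unfolding minimal_idempotent_def by blast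

lemma struct_group_subset_ellis:
  fixes \<alpha> :: "'t::ab_group_add \<Rightarrow> 'a::metric_space \<Rightarrow> 'a"
  assumes "action_by_homeos \<alpha>" and "compact (UNIV :: 'a set)" and "minimal_idempotent \<alpha> e"
  shows "struct_group \<alpha> e \<subseteq> ellis \<alpha>"
proof
  fix k assume "k \<in> struct_group \<alpha> e"
  then obtain g where "k = e \<circ> g \<circ> e" "g \<in> ellis \<alpha>" unfolding struct_group_def by blast
  with ellis_comp_closed[OF assms(1)] minimal_idempotent_in_ellis[OF assms]
  show "k \<in> ellis \<alpha>" by simp
qed

lemma struct_group_absorb:
  assumes "minimal_idempotent \<alpha> e" and "g \<in> struct_group \<alpha> e"
  shows "e \<circ> g = g" "g \<circ> e = g"
proof -
  have "e \<circ> e = e" using assms(1) unfolding minimal_idempotent_def by blast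
  then show "e \<circ> g = g" "g \<circ> e = g"
    using corner_absorb assms(2) unfolding struct_group_def by blast+
qed

lemma struct_group_inverse:
  fixes \<alpha> :: "'t::ab_group_add \<Rightarrow> 'a::metric_space \<Rightarrow> 'a"
  assumes "action_by_homeos \<alpha>" and "compact (UNIV :: 'a set)" and e: "minimal_idempotent \<alpha> e"
    and g: "g \<in> struct_group \<alpha> e"
  shows "H_inv \<alpha> e g \<in> struct_group \<alpha> e" "g \<circ> H_inv \<alpha> e g = e" "H_inv \<alpha> e g \<circ> g = e"
proof -
  interpret compact_map_semigroup "ellis \<alpha>"
    using assms(1,2) by (rule compact_map_semigroup_ellis)
  have "e \<in> min_ideal (ellis \<alpha>)" "e \<circ> e = e"
    using e unfolding minimal_idempotent_def by blast+
  then have "\<exists>!h. h \<in> struct_group \<alpha> e \<and> g \<circ> h = e \<and> h \<circ> g = e"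
    unfolding struct_group_def by (rule min_idempotent_inverse_unique[OF _ _ g[unfolded struct_group_def]])
  then have "H_inv \<alpha> e g \<in> struct_group \<alpha> e \<and> g \<circ> H_inv \<alpha> e g = e \<and> H_inv \<alpha> e g \<circ> g = e"
    unfolding H_inv_def by (rule theI')
  then show "H_inv \<alpha> e g \<in> struct_group \<alpha> e" "g \<circ> H_inv \<alpha> e g = e" "H_inv \<alpha> e g \<circ> g = e"
    by blast+
qed

lemma ellis_displacement_const:
  fixes \<pi> :: "'a::topological_space \<Rightarrow> 'b::{ab_group_add,topological_group_add,t2_space}"
  assumes fm: "factor_map \<alpha> \<pi> UNIV (\<lambda>t \<xi>. \<xi> + \<tau> t)" and g: "g \<in> ellis \<alpha>"
  shows "\<pi> (g x) - \<pi> x = \<pi> (g y) - \<pi> y"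
proof -
  have cont: "continuous_on UNIV \<pi>" and equiv: "\<pi> (\<alpha> t x) = \<pi> x + \<tau> t" for t x
    using fm unfolding factor_map_def by auto
  define C where "C = {k. \<forall>x y. \<pi> (k x) - \<pi> x = \<pi> (k y) - \<pi> y}"
  have "closed C" unfolding C_def
    by (intro closed_Collect_all closed_Collect_eq continuous_on_diff continuous_on_const
        continuous_on_eval_comp[OF cont])
  moreover have "range \<alpha> \<subseteq> C" unfolding C_def using equiv by auto
  ultimately have "ellis \<alpha> \<subseteq> C" unfolding ellis_def by (simp add: closure_minimal)
  then show ?thesis using g unfolding C_def by blast
qed

lemma ellis_translation:
  fixes \<pi> :: "'a::topological_space \<Rightarrow> 'b::{ab_group_add,topological_group_add,t2_space}"
  assumes fm: "factor_map \<alpha> \<pi> UNIV (\<lambda>t \<xi>. \<xi> + \<tau> t)" and g: "g \<in> ellis \<alpha>"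
  shows "\<pi> (g x) = \<pi> x + ev0 (pi_star \<pi> g)"
proof -
  define x0 where "x0 = (SOME x. \<pi> x = 0)"
  have "0 \<in> range \<pi>" using fm unfolding factor_map_def by simp
  then obtain x1 where "\<pi> x1 = 0" by (metis imageE)
  then have "\<pi> x0 = 0" unfolding x0_def by (rule someI)
  then have "\<pi> (g x) - \<pi> x = ev0 (pi_star \<pi> g)"
    using ellis_displacement_const[OF fm g, of x x0] unfolding ev0_def pi_star_def x0_def by simp
  then show ?thesis by (simp add: diff_eq_eq add.commute)
qed

lemma ellis_idempotent_preserves_fibres:
  fixes \<pi> :: "'a::topological_space \<Rightarrow> 'b::{ab_group_add,topological_group_add,t2_space}"
  assumes fm: "factor_map \<alpha> \<pi> UNIV (\<lambda>t \<xi>. \<xi> + \<tau> t)" and e: "e \<in> ellis \<alpha>" "e \<circ> e = e"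
  shows "\<pi> (e x) = \<pi> x"
proof -
  have "\<pi> (e x) + ev0 (pi_star \<pi> e) = \<pi> (e x)"
    using ellis_translation[OF fm e(1), of "e x"] e(2) by (simp add: comp_def fun_eq_iff)
  then show ?thesis using ellis_translation[OF fm e(1), of x] by simp
qed

lemma translate_image_eq_vimage:
  fixes a :: "'b::group_add"
  shows "(\<lambda>\<xi>. \<xi> + a) ` A = (\<lambda>\<zeta>. \<zeta> - a) -` A"
proof (intro equalityI subsetI)
  fix \<zeta> assume "\<zeta> \<in> (\<lambda>\<zeta>. \<zeta> - a) -` A"
  then show "\<zeta> \<in> (\<lambda>\<xi>. \<xi> + a) ` A" by (intro rev_image_eqI[of "\<zeta> - a"]) simp_all
qed auto

lemma acts_trivially_at_conjugate:
  fixes \<pi> :: "'a \<Rightarrow> 'b::group_add"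
  assumes gh: "g \<circ> h = e" and hg: "h \<circ> g = e" and eh: "e \<circ> h = h" and he: "h \<circ> e = h"
    and ef: "e \<circ> f = f" and \<pi>e: "\<And>x. \<pi> (e x) = \<pi> x" and \<pi>g: "\<And>x. \<pi> (g x) = \<pi> x + a"
  shows "acts_trivially_at \<pi> e (g \<circ> f \<circ> h) \<zeta> \<longleftrightarrow> acts_trivially_at \<pi> e f (\<zeta> - a)"
proof -
  note gh' = comp_eq_dest_lhs[OF gh] and hg' = comp_eq_dest_lhs[OF hg]
    and eh' = comp_eq_dest_lhs[OF eh] and he' = comp_eq_dest_lhs[OF he] and ef' = comp_eq_dest_lhs[OF ef]
  have \<pi>h: "\<pi> (h y) = \<pi> y - a" for y
    using \<pi>g[of "h y"] \<pi>e[of y] gh'[of y] by (simp add: eq_diff_eq)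
  show ?thesis unfolding acts_trivially_at_def
  proof (intro iffI ballI)
    fix z assume triv: "\<forall>y\<in>e ` \<pi> -` {\<zeta>}. (g \<circ> f \<circ> h) y = y" and "z \<in> e ` \<pi> -` {\<zeta> - a}"
    then obtain x where x: "\<pi> x = \<zeta> - a" "z = e x" by blast
    then have "e (g x) \<in> e ` \<pi> -` {\<zeta>}" using \<pi>g[of x] by simp
    then have "(g \<circ> f \<circ> h) (e (g x)) = e (g x)" by (rule bspec[OF triv])
    then have "h (g (f (h (e (g x))))) = h (e (g x))" by simp
    then show "f z = z" using x(2) by (simp add: ef' he' hg')
  next
    fix z assume triv: "\<forall>y\<in>e ` \<pi> -` {\<zeta> - a}. f y = y" and "z \<in> e ` \<pi> -` {\<zeta>}"
    then obtain y where y: "\<pi> y = \<zeta>" "z = e y" by blast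
    then have "e (h y) \<in> e ` \<pi> -` {\<zeta> - a}" using \<pi>h[of y] by simp
    then have "f (e (h y)) = e (h y)" by (rule bspec[OF triv])
    then have "f (h y) = h y" by (simp add: eh')
    then show "(g \<circ> f \<circ> h) z = z" using y(2) by (simp add: he' gh')
  qed
qed

lemma supp_conjugate:
  fixes \<pi> :: "'a \<Rightarrow> 'b::group_add"
  assumes "g \<circ> h = e" and "h \<circ> g = e" and "e \<circ> h = h" and "h \<circ> e = h"
    and "e \<circ> f = f" and "\<And>x. \<pi> (e x) = \<pi> x" and "\<And>x. \<pi> (g x) = \<pi> x + a"
  shows "supp \<pi> e (g \<circ> f \<circ> h) = (\<lambda>\<xi>. \<xi> + a) ` supp \<pi> e f"
  unfolding translate_image_eq_vimage supp_def
  using acts_trivially_at_conjugate[OF assms] by auto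

theorem mainTheorem5:
  fixes \<alpha> :: "'t::ab_group_add \<Rightarrow> 'a::metric_space \<Rightarrow> 'a"
    and \<pi> :: "'a \<Rightarrow> 'b::{ab_group_add,topological_group_add,metric_space}"
    and \<tau> :: "'t \<Rightarrow> 'b"
    and e f :: "'a \<Rightarrow> 'a"
    and s :: "'b \<Rightarrow> ('a \<Rightarrow> 'a)"
    and a :: 'b
  assumes X_compact: "compact (UNIV :: 'a set)"
    and act: "action_by_homeos \<alpha>"
    and minimal: "minimal_system \<alpha>"
    and mef: "max_equicontinuous_factor \<alpha> \<pi> \<tau>"
    and e_min: "minimal_idempotent \<alpha> e"
    and s_in: "\<forall>\<xi>. s \<xi> \<in> struct_group \<alpha> e"
    and s_section: "\<forall>\<xi>. ev0 (pi_star \<pi> (s \<xi>)) = \<xi>"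
    and s_equiv: "\<forall>t. s \<circ> delta \<tau> t = (\<lambda>\<xi>. \<alpha> t \<circ> s \<xi>)"
    and f_K: "f \<in> K_group \<alpha> \<pi> e"
    and f_ne: "f \<noteq> e"
  shows "supp \<pi> e (s a \<circ> f \<circ> H_inv \<alpha> e (s a)) = (\<lambda>\<xi>. \<xi> + a) ` supp \<pi> e f"
proof -
  have fm: "factor_map \<alpha> \<pi> UNIV (\<lambda>t \<xi>. \<xi> + \<tau> t)"
    using mef unfolding max_equicontinuous_factor_def by blast
  have sa: "s a \<in> struct_group \<alpha> e" and f: "f \<in> struct_group \<alpha> e"
    using s_in f_K unfolding K_group_def by blast+
  define h where "h = H_inv \<alpha> e (s a)"
  have h: "h \<in> struct_group \<alpha> e" "s a \<circ> h = e" "h \<circ> s a = e"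
    unfolding h_def using struct_group_inverse[OF act X_compact e_min sa] by blast+
  have "e \<circ> e = e" using e_min unfolding minimal_idempotent_def by blast
  with minimal_idempotent_in_ellis[OF act X_compact e_min]
  have \<pi>e: "\<pi> (e x) = \<pi> x" for x
    by (rule ellis_idempotent_preserves_fibres[OF fm])
  have "s a \<in> ellis \<alpha>" using sa struct_group_subset_ellis[OF act X_compact e_min] by blast
  then have \<pi>s: "\<pi> (s a x) = \<pi> x + a" for x
    using ellis_translation[OF fm] s_section by simp
  show ?thesis
    unfolding h_def[symmetric]
    using supp_conjugate[OF h(2,3) struct_group_absorb[OF e_min h(1)]
        struct_group_absorb(1)[OF e_min f] \<pi>e \<pi>s] .
qed

end
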